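(* Let $\Phi \in \mathbb{R}^{m\times n}$, let $x_0\in\mathbb{R}^n$ be nonzero with support $I\eqdef\{i: x_{0,i}\neq 0\}$, and assume $x_0$ is identifiable, i.e. $x_0$ is a solution of $\min_x\|x\|_1$ subject to $\Phi x=\Phi x_0$. Let $p_1 \in \operatorname{Argmin}_{p\in\mathcal{D}_{x_0}}\|p\|_1$, where $$\mathcal{D}_{x_0} \eqdef \{ p \in \mathbb{R}^m : \Phi_{\cdot,I}^* p = \operatorname{sign}(x_{0,I}),\ \|\Phi^* p\|_\infty \le 1\},$$ let $J \eqdef \{ i : |(\Phi^* p_1)_i| = 1\}$, $S \eqdef \operatorname{supp}(p_1) = \{ j : p_{1,j}\neq 0\}$, $s_J \eqdef \Phi_{\cdot,J}^* p_1 \in\{-1,1\}^{|J|}$ and $q_S \eqdef \operatorname{sign}(p_{1,S}) \in \{-1,1\}^{|S|}$. Assume that $\Phi_{S,J}$ has full rank and that $$s_J \notin \operatorname{Im}(\Phi_{S',J}^* ) \ \ \text{for all } S'\subseteq\{1,\dots,m\} \text{ with } |S'|<|J|, \qquad q_S\notin\operatorname{Im}(\Phi_{S,J'}) \ \ \text{for all } J'\subseteq\{1,\dots,n\} \text{ with } |J'|<|S|.$$ Then $|S|=|J|$ and $\Phi_{S,J}$ is invertible. Consequently, with $T_1 \eqdef \{u\in\mathbb{R}^m : \operatorname{supp}(u)\subseteq S\}$, one has $P_{T_1}\Phi_{\cdot,J} = \mathrm{Id}_{\cdot,S}\Phi_{S,J}$ and $\operatorname{Ker}(P_{T_1}\Phi_{\cdot,J})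 = \{0\}$.
   Context: $\operatorname{sign}$ acts entrywise. $\Phi_{S,J}$ denotes the submatrix of $\Phi$ with rows in $S$ and columns in $J$, a dot meaning all rows/columns are kept, and $\Phi_{S,J}^*\eqdef(\Phi_{S,J})^*$. $\mathrm{Id}_{\cdot,S}$ is the submatrix of the $m\times m$ identity with columns in $S$. $P_V$ is the orthogonal projector onto a subspace $V$; $T_1$ is the orthogonal complement of the subspace parallel to $\partial\|p_1\|_\infty$... more precisely, $T_1=\mathrm{par}(\partial\|p_1\|_1)^\perp$, which equals the set of vectors supported in $S$. *)

theory Defs
  imports "Jordan_Normal_Form.DL_Rank_Submatrix" "Jordan_Normal_Form.Matrix_Kernel"
begin

(* Vectors in R^k are "real vec" of dimension k, matrices in R^{m x n} are
   "real mat" in carrier_mat m n; indices are 0-based. *)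

definition l1_norm :: "real vec \<Rightarrow> real" where
  "l1_norm v = (\<Sum>i<dim_vec v. \<bar>v $ i\<bar>)"

definition supp_vec :: "real vec \<Rightarrow> nat set" where
  "supp_vec v = {i. i < dim_vec v \<and> v $ i \<noteq> 0}"

(* sub-vector v_J, indices of J taken in increasing order (same convention as submatrix) *)
definition subvec :: "real vec \<Rightarrow> nat set \<Rightarrow> real vec" where
  "subvec v J = vec (card {i. i < dim_vec v \<and> i \<in> J}) (\<lambda>k. v $ pick J k)"

definition identifiable :: "real mat \<Rightarrow> real vec \<Rightarrow> bool" where
  "identifiable Phi x0 \<longleftrightarrow>
     (\<forall>x \<in> carrier_vec (dim_col Phi). Phi *\<^sub>v x = Phi *\<^sub>v x0 \<longrightarrow> l1_norm x0 \<le> l1_norm x)"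

definition dual_set :: "real mat \<Rightarrow> real vec \<Rightarrow> real vec set" where
  "dual_set Phi x0 = {p \<in> carrier_vec (dim_row Phi).
      subvec (transpose_mat Phi *\<^sub>v p) (supp_vec x0) = map_vec sgn (subvec x0 (supp_vec x0))
    \<and> (\<forall>i < dim_col Phi. \<bar>(transpose_mat Phi *\<^sub>v p) $ i\<bar> \<le> 1)}"

definition mat_image :: "real mat \<Rightarrow> real vec set" where
  "mat_image A = {A *\<^sub>v v | v. v \<in> carrier_vec (dim_col A)}"

definition full_rank :: "real mat \<Rightarrow> bool" where
  "full_rank A \<longleftrightarrow> vec_space.rank (dim_row A) A = min (dim_row A) (dim_col A)"

(* orthogonal projector onto T = {u in R^m : supp u \<subseteq> S}: the coordinate projector *)
definition coord_proj :: "nat \<Rightarrow> nat set \<Rightarrow> real mat" where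
  "coord_proj m S = mat m m (\<lambda>(i,j). if i = j \<and> i \<in> S then 1 else 0)"

end

theory Submission
  imports Defs
begin

text \<open>Write \<open>p\<^sub>1 = Id\<^sub>\<cdot>\<^sub>,\<^sub>S w\<close> with \<open>w = p\<^sub>1\<^sub>,\<^sub>S\<close>. Then \<open>s\<^sub>J = \<Phi>\<^sub>S\<^sub>,\<^sub>J\<^sup>* w\<close>,
  so the hypothesis on \<open>s\<^sub>J\<close> with \<open>S' = S\<close> gives \<open>|J| \<le> |S|\<close>. If \<open>|J| < |S|\<close>, then
  \<open>\<Phi>\<^sub>S\<^sub>,\<^sub>J\<close> has full column rank and \<open>q\<^sub>S \<notin> Im \<Phi>\<^sub>S\<^sub>,\<^sub>J\<close>, so the least-squares residual \<open>d\<close>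
  of \<open>q\<^sub>S\<close> satisfies \<open>\<Phi>\<^sub>S\<^sub>,\<^sub>J\<^sup>* d = 0\<close> and \<open>\<langle>q\<^sub>S, d\<rangle> > 0\<close>. For small \<open>t > 0\<close> the vector
  \<open>p\<^sub>1 - t Id\<^sub>\<cdot>\<^sub>,\<^sub>S d\<close> stays in \<open>\<D>\<^sub>x\<^sub>0\<close> and has smaller \<open>\<ell>\<^sub>1\<close>-norm, contradicting the
  minimality of \<open>p\<^sub>1\<close>. So \<open>\<Phi>\<^sub>S\<^sub>,\<^sub>J\<close> is square of full rank, hence invertible, and
  \<open>P\<^sub>T\<^sub>1\<close> merely zeroes the rows outside \<open>S\<close>.\<close>

lemma card_less_member_less_card:
  fixes S :: "nat set"
  assumes "finite S" "i \<in> S"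
  shows "card {a\<in>S. a < i} < card S"
  using assms by (intro psubset_card_mono) auto

lemma Collect_less_and_mem_eq: "S \<subseteq> {..<m} \<Longrightarrow> {i. i < m \<and> i \<in> S} = S"
  by auto

lemma sum_pick:
  assumes "finite S"
  shows "(\<Sum>l<card S. f (pick S l)) = sum f S"
  by (rule sum.reindex_bij_witness[where j = "pick S" and i = "\<lambda>x. card {a\<in>S. a < x}"])
    (use assms in \<open>auto simp: pick_in_set card_pick pick_card_in_set card_less_member_less_card\<close>)

lemma dim_subvec: "J \<subseteq> {..<dim_vec v} \<Longrightarrow> dim_vec (subvec v J) = card J"
  by (simp add: subvec_def Collect_less_and_mem_eq)

lemma subvec_index_card:
  assumes "J \<subseteq> {..<dim_vec v}" "j \<in> J"
  shows "subvec v J $ card {a\<in>J. a < j} = v $ j"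
proof -
  have "finite J" using assms(1) finite_subset by blast
  then show ?thesis
    using assms card_less_member_less_card[of J j]
    by (simp add: subvec_def Collect_less_and_mem_eq pick_card_in_set)
qed

lemma subvec_cong:
  assumes "dim_vec v = dim_vec w" "\<And>j. j \<in> J \<Longrightarrow> v $ j = w $ j" "J \<subseteq> {..<dim_vec v}"
  shows "subvec v J = subvec w J"
proof -
  have "finite J" using assms(3) finite_subset by blast
  then show ?thesis
    using assms by (auto simp: subvec_def Collect_less_and_mem_eq pick_in_set)
qed

lemma mult_mat_vec_index_sum:
  assumes "A \<in> carrier_mat k r" "u \<in> carrier_vec r" "i < k"
  shows "(A *\<^sub>v u) $ i = (\<Sum>l<r. A $$ (i, l) * u $ l)"
  using assms by (auto simp: scalar_prod_def atLeast0LessThan intro!: sum.cong)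

lemma submatrix_one_carrier:
  "S \<subseteq> {..<m} \<Longrightarrow> submatrix (1\<^sub>m m) UNIV S \<in> carrier_mat m (card S)"
  by (auto simp: dim_submatrix Collect_less_and_mem_eq)

lemma submatrix_one_index:
  assumes "S \<subseteq> {..<m}" "i < m" "l < card S"
  shows "submatrix (1\<^sub>m m) UNIV S $$ (i, l) = (if i = pick S l then 1 else 0)"
proof -
  have "pick S l \<in> S" using assms(3) by (simp add: pick_in_set)
  then show ?thesis
    using assms by (auto simp: submatrix_index Collect_less_and_mem_eq pick_UNIV)
qed

lemma submatrix_one_mult_vec_index:
  fixes u :: "'a :: comm_ring_1 vec"
  assumes S: "S \<subseteq> {..<m}" and u: "u \<in> carrier_vec (card S)" and i: "i < m"
  shows "(submatrix (1\<^sub>m m) UNIV S *\<^sub>v u) $ i = (if i \<in> S then u $ card {a\<in>S. a < i} else 0)"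
proof -
  have fin: "finite S" using S finite_subset by blast
  have "(submatrix (1\<^sub>m m) UNIV S *\<^sub>v u) $ i
      = (\<Sum>l<card S. submatrix (1\<^sub>m m) UNIV S $$ (i, l) * u $ l)"
    using submatrix_one_carrier[OF S] u i by (rule mult_mat_vec_index_sum)
  also have "\<dots> = (\<Sum>l<card S. if i = pick S l then u $ card {a\<in>S. a < pick S l} else 0)"
    by (intro sum.cong refl) (simp add: submatrix_one_index[OF S i] card_pick)
  also have "\<dots> = (\<Sum>x\<in>S. if i = x then u $ card {a\<in>S. a < x} else 0)"
    using fin by (rule sum_pick)
  also have "\<dots> = (if i \<in> S then u $ card {a\<in>S. a < i} else 0)"
    using fin by (simp add: sum.delta)
  finally show ?thesis .
qed

lemma sum_submatrix_one_mult_vec: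
  fixes u :: "'a :: comm_ring_1 vec"
  assumes S: "S \<subseteq> {..<m}" and u: "u \<in> carrier_vec (card S)" and f0: "\<And>i. f i 0 = 0"
  shows "(\<Sum>i<m. f i ((submatrix (1\<^sub>m m) UNIV S *\<^sub>v u) $ i)) = (\<Sum>l<card S. f (pick S l) (u $ l))"
proof -
  have fin: "finite S" using S finite_subset by blast
  have "(\<Sum>i<m. f i ((submatrix (1\<^sub>m m) UNIV S *\<^sub>v u) $ i))
      = (\<Sum>i<m. if i \<in> S then f i (u $ card {a\<in>S. a < i}) else 0)"
    using f0 by (intro sum.cong) (auto simp: submatrix_one_mult_vec_index[OF S u])
  also have "\<dots> = (\<Sum>i\<in>{..<m} \<inter> S. f i (u $ card {a\<in>S. a < i}))"
    by (rule sum.inter_restrict[symmetric]) simp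
  also have "{..<m} \<inter> S = S"
    using S by blast
  also have "(\<Sum>i\<in>S. f i (u $ card {a\<in>S. a < i}))
      = (\<Sum>l<card S. f (pick S l) (u $ card {a\<in>S. a < pick S l}))"
    using fin by (rule sum_pick[symmetric])
  also have "\<dots> = (\<Sum>l<card S. f (pick S l) (u $ l))"
    by (intro sum.cong refl) (simp add: card_pick)
  finally show ?thesis .
qed

lemma submatrix_one_mult_subvec:
  fixes v :: "real vec"
  assumes v: "v \<in> carrier_vec m" and supp: "\<And>i. i < m \<Longrightarrow> i \<notin> S \<Longrightarrow> v $ i = 0"
    and S: "S \<subseteq> {..<m}"
  shows "submatrix (1\<^sub>m m) UNIV S *\<^sub>v subvec v S = v"
proof -
  have dv: "dim_vec v = m" using v by simp
  have sv: "subvec v S \<in> carrier_vec (card S)"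
    using S dv by (intro carrier_vecI dim_subvec) simp
  show ?thesis
  proof (rule eq_vecI)
    fix i assume "i < dim_vec v"
    then have i: "i < m" using dv by simp
    show "(submatrix (1\<^sub>m m) UNIV S *\<^sub>v subvec v S) $ i = v $ i"
    proof (cases "i \<in> S")
      case True
      then show ?thesis
        using subvec_index_card[of S v i] S dv by (simp add: submatrix_one_mult_vec_index[OF S sv i])
    qed (simp add: submatrix_one_mult_vec_index[OF S sv i] supp i)
  qed (use carrier_matD(1)[OF submatrix_one_carrier[OF S]] dv in simp)
qed

lemma submatrix_one_mult_vec_eq_0:
  fixes u :: "'a :: comm_ring_1 vec"
  assumes S: "S \<subseteq> {..<m}" and u: "u \<in> carrier_vec (card S)"
    and Eu: "submatrix (1\<^sub>m m) UNIV S *\<^sub>v u = 0\<^sub>v m"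
  shows "u = 0\<^sub>v (card S)"
proof (rule eq_vecI)
  fix l assume "l < dim_vec (0\<^sub>v (card S) :: 'a vec)"
  then have l: "l < card S" by simp
  have "pick S l \<in> S" using l by (simp add: pick_in_set)
  then have "pick S l < m" using S by auto
  then show "u $ l = 0\<^sub>v (card S) $ l"
    using arg_cong[OF Eu, of "\<lambda>w. w $ pick S l"] \<open>pick S l \<in> S\<close> l
    by (simp add: submatrix_one_mult_vec_index[OF S u] card_pick)
qed (use u in auto)

lemma transpose_mult_vec_index_sum:
  assumes "Phi \<in> carrier_mat m n" "v \<in> carrier_vec m" "j < n"
  shows "(transpose_mat Phi *\<^sub>v v) $ j = (\<Sum>i<m. Phi $$ (i, j) * v $ i)"
  using assms by (auto simp: scalar_prod_def atLeast0LessThan intro!: sum.cong)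

lemma transpose_mult_submatrix_one_index:
  fixes Phi :: "real mat"
  assumes Phi: "Phi \<in> carrier_mat m n" and S: "S \<subseteq> {..<m}"
    and u: "u \<in> carrier_vec (card S)" and j: "j < n"
  shows "(transpose_mat Phi *\<^sub>v (submatrix (1\<^sub>m m) UNIV S *\<^sub>v u)) $ j
    = (\<Sum>l<card S. Phi $$ (pick S l, j) * u $ l)"
proof -
  have "submatrix (1\<^sub>m m) UNIV S *\<^sub>v u \<in> carrier_vec m"
    using submatrix_one_carrier[OF S] u by (rule mult_mat_vec_carrier)
  then show ?thesis
    using sum_submatrix_one_mult_vec[OF S u, of "\<lambda>i x. Phi $$ (i, j) * x"]
    by (simp add: transpose_mult_vec_index_sum[OF Phi _ j])
qed

lemma subvec_transpose_mult_submatrix_one: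
  fixes Phi :: "real mat"
  assumes Phi: "Phi \<in> carrier_mat m n" and S: "S \<subseteq> {..<m}" and J: "J \<subseteq> {..<n}"
    and u: "u \<in> carrier_vec (card S)"
  shows "subvec (transpose_mat Phi *\<^sub>v (submatrix (1\<^sub>m m) UNIV S *\<^sub>v u)) J
    = transpose_mat (submatrix Phi S J) *\<^sub>v u"
proof -
  have fin: "finite J" using J finite_subset by blast
  have A: "submatrix Phi S J \<in> carrier_mat (card S) (card J)"
    using Phi S J by (auto simp: dim_submatrix Collect_less_and_mem_eq)
  show ?thesis
  proof (rule eq_vecI)
    fix k assume "k < dim_vec (transpose_mat (submatrix Phi S J) *\<^sub>v u)"
    then have k: "k < card J" using A by simp
    have pk: "pick J k < n" using pick_in_set[of k J] k J by auto
    have "subvec (transpose_mat Phi *\<^sub>v (submatrix (1\<^sub>m m) UNIV S *\<^sub>v u)) J $ k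
        = (\<Sum>l<card S. Phi $$ (pick S l, pick J k) * u $ l)"
      using Phi J k by (simp add: subvec_def Collect_less_and_mem_eq
          transpose_mult_submatrix_one_index[OF Phi S u pk])
    also have "\<dots> = (transpose_mat (submatrix Phi S J) *\<^sub>v u) $ k"
      using Phi S J k by (simp add: transpose_mult_vec_index_sum[OF A u k] submatrix_index
          Collect_less_and_mem_eq)
    finally show "subvec (transpose_mat Phi *\<^sub>v (submatrix (1\<^sub>m m) UNIV S *\<^sub>v u)) J $ k
        = (transpose_mat (submatrix Phi S J) *\<^sub>v u) $ k" .
  qed (use Phi J A in \<open>simp add: subvec_def Collect_less_and_mem_eq\<close>)
qed

lemma l1_norm_submatrix_one_mult_vec:
  assumes S: "S \<subseteq> {..<m}" and u: "u \<in> carrier_vec (card S)"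
  shows "l1_norm (submatrix (1\<^sub>m m) UNIV S *\<^sub>v u) = l1_norm u"
proof -
  have "l1_norm (submatrix (1\<^sub>m m) UNIV S *\<^sub>v u)
      = (\<Sum>i<m. \<bar>(submatrix (1\<^sub>m m) UNIV S *\<^sub>v u) $ i\<bar>)"
    by (simp only: l1_norm_def dim_mult_mat_vec carrier_matD(1)[OF submatrix_one_carrier[OF S]])
  also have "\<dots> = (\<Sum>l<card S. \<bar>u $ l\<bar>)"
    using sum_submatrix_one_mult_vec[OF S u, of "\<lambda>_ x. \<bar>x\<bar>"] by simp
  finally show ?thesis
    using u by (simp add: l1_norm_def)
qed

lemma abs_diff_eq_abs_minus_sgn_mult:
  fixes a x :: real
  assumes "\<bar>x\<bar> < \<bar>a\<bar>"
  shows "\<bar>a - x\<bar> = \<bar>a\<bar> - sgn a * x"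
  using assms by (cases a "0::real" rule: linorder_cases) auto

lemma l1_norm_diff_small:
  assumes w: "w \<in> carrier_vec k" and d: "d \<in> carrier_vec k"
    and small: "\<And>l. l < k \<Longrightarrow> \<bar>d $ l\<bar> < \<bar>w $ l\<bar>"
  shows "l1_norm (w - d) = l1_norm w - map_vec sgn w \<bullet> d"
proof -
  have "l1_norm (w - d) = (\<Sum>l<k. \<bar>w $ l\<bar> - sgn (w $ l) * d $ l)"
    using w d small by (auto simp: l1_norm_def abs_diff_eq_abs_minus_sgn_mult intro!: sum.cong)
  also have "\<dots> = l1_norm w - map_vec sgn w \<bullet> d"
    using w d by (simp add: l1_norm_def scalar_prod_def atLeast0LessThan sum_subtractf)
  finally show ?thesis .
qed

lemma (in vec_space) full_col_rank_mult_vec_eq_0: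
  assumes A: "A \<in> carrier_mat n r" and rk: "rank A = r"
    and v: "v \<in> carrier_vec r" and Av: "A *\<^sub>v v = 0\<^sub>v n"
  shows "v = 0\<^sub>v r"
proof (rule ccontr)
  assume nz: "v \<noteq> 0\<^sub>v r"
  show False
  proof (cases "distinct (cols A)")
    case True
    then have "lin_indpt (set (cols A))"
      using full_rank_lin_indpt[OF A rk] by auto
    then show False using lin_depI[OF A v nz Av True] by blast
  next
    case False
    obtain S where S: "maximal S (\<lambda>T. T \<subseteq> set (cols A) \<and> lin_indpt T)"
      using maximal_exists[of "\<lambda>T. T \<subseteq> set (cols A) \<and> lin_indpt T" "card (set (cols A))" "{}"]
      by (meson List.finite_set card_mono empty_iff empty_subsetI finite_lin_indpt2 rev_finite_subset)
    then have "card S \<le> card (set (cols A))" by (simp add: card_mono maximal_def)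
    moreover have "card (set (cols A)) < r"
      using False A card_distinct[of "cols A"] card_length[of "cols A"]
      by (metis cols_length carrier_matD(2) le_neq_implies_less)
    ultimately show False using rank_card_indpt[OF A S] rk by simp
  qed
qed

lemma det_transpose_mult_self_nonzero:
  fixes A :: "real mat"
  assumes A: "A \<in> carrier_mat k r" and rk: "vec_space.rank k A = r"
  shows "det (transpose_mat A * A) \<noteq> 0"
proof
  have G: "transpose_mat A * A \<in> carrier_mat r r" using A by simp
  assume "det (transpose_mat A * A) = 0"
  then obtain v where v: "v \<in> carrier_vec r" "v \<noteq> 0\<^sub>v r" "(transpose_mat A * A) *\<^sub>v v = 0\<^sub>v r"
    using det_0_iff_vec_prod_zero_field[OF G] by blast
  have Av: "A *\<^sub>v v \<in> carrier_vec k" using A v by auto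
  have "(A *\<^sub>v v) \<bullet> (A *\<^sub>v v) = ((transpose_mat A * A) *\<^sub>v v) \<bullet> v"
    using transpose_vec_mult_scalar[OF A v(1) Av] A v(1)
    by (metis assoc_mult_mat_vec transpose_carrier_mat)
  then have "A *\<^sub>v v = 0\<^sub>v k" using v conjugate_square_eq_0_vec[OF Av] by simp
  then show False using vec_space.full_col_rank_mult_vec_eq_0[OF A rk v(1)] v(2) by blast
qed

lemma exists_kernel_transpose_vec_pos_scalar:
  fixes A :: "real mat"
  assumes A: "A \<in> carrier_mat k r" and rk: "vec_space.rank k A = r"
    and q: "q \<in> carrier_vec k" and q_notin: "q \<notin> mat_image A"
  obtains d where "d \<in> carrier_vec k" "transpose_mat A *\<^sub>v d = 0\<^sub>v r" "q \<bullet> d > 0"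
proof -
  define G where "G = transpose_mat A * A"
  have G: "G \<in> carrier_mat r r" using A by (simp add: G_def)
  have GA: "G *\<^sub>v v = transpose_mat A *\<^sub>v (A *\<^sub>v v)" if "v \<in> carrier_vec r" for v
    unfolding G_def using A that by (metis assoc_mult_mat_vec transpose_carrier_mat)
  have "det G \<noteq> 0"
    unfolding G_def using A rk by (rule det_transpose_mult_self_nonzero)
  then obtain Gi where Gi: "Gi \<in> carrier_mat r r" "G * Gi = 1\<^sub>m r"
    using det_non_zero_imp_unit[OF G, of "()"] unfolding Units_def ring_mat_def by auto
  \<comment> \<open>\<open>d\<close> is the residual of the least-squares approximation of \<open>q\<close> by the columns of \<open>A\<close>.\<close>
  define w where "w = Gi *\<^sub>v (transpose_mat A *\<^sub>v q)"
  define d where "d = q - A *\<^sub>v w"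
  have Atq: "transpose_mat A *\<^sub>v q \<in> carrier_vec r" using A q by auto
  have w: "w \<in> carrier_vec r" using Gi Atq by (simp add: w_def)
  have Aw: "A *\<^sub>v w \<in> carrier_vec k" using A w by auto
  have d: "d \<in> carrier_vec k" using q Aw by (simp add: d_def)
  have "transpose_mat A *\<^sub>v (A *\<^sub>v w) = (G * Gi) *\<^sub>v (transpose_mat A *\<^sub>v q)"
    using GA[OF w] G Gi(1) Atq by (simp add: w_def assoc_mult_mat_vec)
  then have AtAw: "transpose_mat A *\<^sub>v (A *\<^sub>v w) = transpose_mat A *\<^sub>v q"
    using Gi(2) Atq by simp
  have Atd: "transpose_mat A *\<^sub>v d = 0\<^sub>v r"
    using A q Aw Atq by (simp add: d_def mult_minus_distrib_mat_vec AtAw)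
  have q_split: "q = d + A *\<^sub>v w" using q Aw A by (intro eq_vecI) (auto simp: d_def)
  have "d \<noteq> 0\<^sub>v k"
  proof
    assume "d = 0\<^sub>v k"
    then have "q = A *\<^sub>v w" using q_split Aw by simp
    then show False using q_notin w A by (auto simp: mat_image_def)
  qed
  then have "d \<bullet> d > 0" using conjugate_square_greater_0_vec[OF d] by simp
  moreover have "(A *\<^sub>v w) \<bullet> d = 0"
    using transpose_vec_mult_scalar[OF A w d] comm_scalar_prod[OF Aw d] Atd w by simp
  ultimately have "q \<bullet> d > 0"
    using add_scalar_prod_distrib[OF d Aw d] q_split by simp
  with d Atd show thesis by (rule that)
qed

lemma eventually_at_right_0_mult_less:
  fixes a b :: "'i \<Rightarrow> real"
  assumes "finite I" "\<And>i. i \<in> I \<Longrightarrow> 0 < b i"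
  shows "\<forall>\<^sub>F t in at_right 0. \<forall>i\<in>I. t * a i < b i"
proof (rule eventually_ball_finite[OF assms(1)], intro ballI)
  fix i assume "i \<in> I"
  have "((\<lambda>t. t * a i) \<longlongrightarrow> 0 * a i) (at_right 0)"
    by (intro tendsto_intros)
  then show "\<forall>\<^sub>F t in at_right 0. t * a i < b i"
    using assms(2)[OF \<open>i \<in> I\<close>] order_tendstoD(2) by fastforce
qed

lemma supp_vec_subset_saturation:
  fixes Phi :: "real mat"
  assumes Phi: "Phi \<in> carrier_mat m n" and x0: "x0 \<in> carrier_vec n" and p: "p \<in> dual_set Phi x0"
  shows "supp_vec x0 \<subseteq> {j. j < n \<and> \<bar>(transpose_mat Phi *\<^sub>v p) $ j\<bar> = 1}"
proof
  fix i assume i: "i \<in> supp_vec x0"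
  define c where "c = transpose_mat Phi *\<^sub>v p"
  have X: "supp_vec x0 \<subseteq> {..<n}" using x0 by (auto simp: supp_vec_def)
  have dc: "dim_vec c = n" using Phi by (simp add: c_def)
  have "subvec c (supp_vec x0) = map_vec sgn (subvec x0 (supp_vec x0))"
    using p Phi by (simp add: dual_set_def c_def)
  moreover have "subvec c (supp_vec x0) $ card {a\<in>supp_vec x0. a < i} = c $ i"
    using X dc i by (intro subvec_index_card) auto
  moreover have "map_vec sgn (subvec x0 (supp_vec x0)) $ card {a\<in>supp_vec x0. a < i} = sgn (x0 $ i)"
    using X x0 i subvec_index_card[of "supp_vec x0" x0 i] dim_subvec[of "supp_vec x0" x0]
      card_less_member_less_card[of "supp_vec x0" i] finite_subset[OF X]
    by simp
  ultimately have "c $ i = sgn (x0 $ i)" by simp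
  moreover have "x0 $ i \<noteq> 0" "i < n" using i x0 by (auto simp: supp_vec_def)
  ultimately show "i \<in> {j. j < n \<and> \<bar>(transpose_mat Phi *\<^sub>v p) $ j\<bar> = 1}"
    by (simp add: c_def abs_sgn_eq)
qed

lemma dual_set_perturbation:
  fixes Phi :: "real mat"
  assumes Phi: "Phi \<in> carrier_mat m n" and x0: "x0 \<in> carrier_vec n"
    and p1: "p1 \<in> dual_set Phi x0" and p: "p \<in> carrier_vec m"
    and agree: "\<And>j. j < n \<Longrightarrow> \<bar>(transpose_mat Phi *\<^sub>v p1) $ j\<bar> = 1 \<Longrightarrow>
      (transpose_mat Phi *\<^sub>v p) $ j = (transpose_mat Phi *\<^sub>v p1) $ j"
    and bound: "\<And>j. j < n \<Longrightarrow> \<bar>(transpose_mat Phi *\<^sub>v p) $ j\<bar> \<le> 1"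
  shows "p \<in> dual_set Phi x0"
proof -
  have X: "supp_vec x0 \<subseteq> {..<n}" using x0 by (auto simp: supp_vec_def)
  have "subvec (transpose_mat Phi *\<^sub>v p) (supp_vec x0) = subvec (transpose_mat Phi *\<^sub>v p1) (supp_vec x0)"
    using Phi X supp_vec_subset_saturation[OF Phi x0 p1] by (intro subvec_cong) (auto intro: agree)
  then show ?thesis
    using p1 p Phi bound by (simp add: dual_set_def)
qed

lemma submatrix_one_mult_subvec_supp_vec:
  "p \<in> carrier_vec m \<Longrightarrow> submatrix (1\<^sub>m m) UNIV (supp_vec p) *\<^sub>v subvec p (supp_vec p) = p"
  by (rule submatrix_one_mult_subvec) (auto simp: supp_vec_def)

text \<open>Moving \<open>p1\<close> within its support along \<open>-d\<close> keeps the saturated correlations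
  \<open>(\<Phi>\<^sup>* p)\<^sub>J\<close> fixed, and for small steps it keeps the unsaturated ones below \<open>1\<close>
  and the signs of \<open>p1\<close> on its support, so the \<open>\<ell>\<^sub>1\<close>-norm drops at rate \<open>sign(p1\<^sub>S) \<cdot> d\<close>.\<close>

lemma dual_set_step:
  fixes Phi :: "real mat" and p1 :: "real vec" and m :: nat
  defines "S \<equiv> supp_vec p1" and "E \<equiv> submatrix (1\<^sub>m m) UNIV (supp_vec p1)"
    and "w \<equiv> subvec p1 (supp_vec p1)"
  assumes Phi: "Phi \<in> carrier_mat m n" and x0: "x0 \<in> carrier_vec n"
    and p1: "p1 \<in> dual_set Phi x0"
    and J: "J = {j. j < n \<and> \<bar>(transpose_mat Phi *\<^sub>v p1) $ j\<bar> = 1}"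
    and d: "d \<in> carrier_vec (card S)"
    and Ad: "transpose_mat (submatrix Phi S J) *\<^sub>v d = 0\<^sub>v (card J)"
    and t: "0 < t"
    and small_S: "\<And>l. l < card S \<Longrightarrow> t * \<bar>d $ l\<bar> < \<bar>w $ l\<bar>"
    and small_J: "\<And>j. j < n \<Longrightarrow> j \<notin> J \<Longrightarrow>
      t * \<bar>(transpose_mat Phi *\<^sub>v (E *\<^sub>v d)) $ j\<bar> < 1 - \<bar>(transpose_mat Phi *\<^sub>v p1) $ j\<bar>"
  shows "E *\<^sub>v (w - t \<cdot>\<^sub>v d) \<in> dual_set Phi x0"
    and "l1_norm (E *\<^sub>v (w - t \<cdot>\<^sub>v d)) = l1_norm p1 - t * (map_vec sgn w \<bullet> d)"
proof -
  define c where "c = transpose_mat Phi *\<^sub>v p1"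
  define e where "e = transpose_mat Phi *\<^sub>v (E *\<^sub>v d)"
  define p where "p = E *\<^sub>v (w - t \<cdot>\<^sub>v d)"
  have p1m: "p1 \<in> carrier_vec m" using p1 Phi by (simp add: dual_set_def)
  have S: "S \<subseteq> {..<m}" using p1m by (auto simp: S_def supp_vec_def)
  have J_n: "J \<subseteq> {..<n}" using J by auto
  have w: "w \<in> carrier_vec (card S)"
    using S p1m by (auto simp: w_def S_def intro!: carrier_vecI dim_subvec)
  have E: "E \<in> carrier_mat m (card S)"
    using S by (simp add: E_def S_def submatrix_one_carrier)
  have p1_Ew: "p1 = E *\<^sub>v w"
    using p1m by (simp add: E_def w_def submatrix_one_mult_subvec_supp_vec)
  have e_J: "e $ j = 0" if "j \<in> J" for j
  proof -
    have "subvec e J = 0\<^sub>v (card J)"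
      using Ad Phi S J_n d by (simp add: e_def E_def S_def subvec_transpose_mult_submatrix_one)
    then show ?thesis
      using subvec_index_card[of J e j] that J_n Phi
        card_less_member_less_card[OF finite_subset[OF J_n] that] by (simp add: e_def)
  qed
  have Phi_E: "(transpose_mat Phi *\<^sub>v (E *\<^sub>v u)) $ j = (\<Sum>l<card S. Phi $$ (pick S l, j) * u $ l)"
    if "u \<in> carrier_vec (card S)" "j < n" for u j
    unfolding E_def S_def[symmetric] using Phi S that by (rule transpose_mult_submatrix_one_index)
  have Phi_p: "(transpose_mat Phi *\<^sub>v p) $ j = c $ j - t * e $ j" if "j < n" for j
    using w d that
    by (simp add: p_def c_def e_def p1_Ew Phi_E sum_subtractf sum_distrib_left algebra_simps)
  show "p \<in> dual_set Phi x0"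
  proof (rule dual_set_perturbation[OF Phi x0 p1])
    show "p \<in> carrier_vec m" using E w d by (simp add: p_def)
    show "(transpose_mat Phi *\<^sub>v p) $ j = (transpose_mat Phi *\<^sub>v p1) $ j"
      if "j < n" "\<bar>(transpose_mat Phi *\<^sub>v p1) $ j\<bar> = 1" for j
      using that Phi_p e_J J by (simp add: c_def)
    show "\<bar>(transpose_mat Phi *\<^sub>v p) $ j\<bar> \<le> 1" if "j < n" for j
    proof (cases "j \<in> J")
      case True
      then show ?thesis using that Phi_p e_J J by (simp add: c_def)
    next
      case False
      then show ?thesis
        using Phi_p[OF that] small_J[OF that False] t abs_triangle_ineq4[of "c $ j" "t * e $ j"]
        by (simp add: abs_mult c_def e_def)
    qed
  qed
  have "l1_norm p = l1_norm (w - t \<cdot>\<^sub>v d)"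
    using S w d by (simp add: p_def E_def S_def l1_norm_submatrix_one_mult_vec)
  also have "\<dots> = l1_norm w - map_vec sgn w \<bullet> (t \<cdot>\<^sub>v d)"
    using w d small_S t by (intro l1_norm_diff_small) (auto simp: abs_mult)
  also have "l1_norm w = l1_norm (E *\<^sub>v w)"
    unfolding E_def S_def[symmetric] using S w by (rule l1_norm_submatrix_one_mult_vec[symmetric])
  also have "E *\<^sub>v w = p1"
    using p1_Ew by (rule sym)
  finally show "l1_norm p = l1_norm p1 - t * (map_vec sgn w \<bullet> d)"
    using w d by simp
qed

lemma dual_set_descent:
  fixes Phi :: "real mat"
  assumes Phi: "Phi \<in> carrier_mat m n" and x0: "x0 \<in> carrier_vec n"
    and p1: "p1 \<in> dual_set Phi x0"
    and J: "J = {j. j < n \<and> \<bar>(transpose_mat Phi *\<^sub>v p1) $ j\<bar> = 1}"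
    and d: "d \<in> carrier_vec (card (supp_vec p1))"
    and Ad: "transpose_mat (submatrix Phi (supp_vec p1) J) *\<^sub>v d = 0\<^sub>v (card J)"
    and descent: "map_vec sgn (subvec p1 (supp_vec p1)) \<bullet> d > 0"
  obtains p where "p \<in> dual_set Phi x0" "l1_norm p < l1_norm p1"
proof -
  define S where "S = supp_vec p1"
  define w where "w = subvec p1 S"
  define c where "c = transpose_mat Phi *\<^sub>v p1"
  define e where "e = transpose_mat Phi *\<^sub>v (submatrix (1\<^sub>m m) UNIV S *\<^sub>v d)"
  have p1m: "p1 \<in> carrier_vec m" using p1 Phi by (simp add: dual_set_def)
  have w_nz: "w $ l \<noteq> 0" if "l < card S" for l
    using that p1m pick_in_set[of l S]
    by (auto simp: w_def subvec_def S_def supp_vec_def)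
  have "\<forall>\<^sub>F t in at_right 0. 0 < t \<and> (\<forall>l\<in>{..<card S}. t * \<bar>d $ l\<bar> < \<bar>w $ l\<bar>)
      \<and> (\<forall>j\<in>{..<n} - J. t * \<bar>e $ j\<bar> < 1 - \<bar>c $ j\<bar>)"
  proof (intro eventually_conj eventually_at_right_0_mult_less)
    show "0 < 1 - \<bar>c $ j\<bar>" if "j \<in> {..<n} - J" for j
      using that p1 Phi J by (force simp: dual_set_def c_def)
  qed (auto simp: eventually_at_right_less w_nz)
  from eventually_happens'[OF trivial_limit_at_right_real this]
  obtain t where "0 < t" "\<And>l. l < card S \<Longrightarrow> t * \<bar>d $ l\<bar> < \<bar>w $ l\<bar>"
    "\<And>j. j < n \<Longrightarrow> j \<notin> J \<Longrightarrow> t * \<bar>e $ j\<bar> < 1 - \<bar>c $ j\<bar>"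
    by auto
  with dual_set_step[OF Phi x0 p1 J] d Ad descent show thesis
    by (intro that[of "submatrix (1\<^sub>m m) UNIV S *\<^sub>v (w - t \<cdot>\<^sub>v d)"])
      (auto simp: S_def w_def c_def e_def)
qed

lemma subvec_transpose_mult_eq_submatrix_supp_vec:
  fixes Phi :: "real mat"
  assumes Phi: "Phi \<in> carrier_mat m n" and p: "p \<in> carrier_vec m" and J: "J \<subseteq> {..<n}"
  shows "subvec (transpose_mat Phi *\<^sub>v p) J
    = transpose_mat (submatrix Phi (supp_vec p) J) *\<^sub>v subvec p (supp_vec p)"
proof -
  have S: "supp_vec p \<subseteq> {..<m}" using p by (auto simp: supp_vec_def)
  have "subvec p (supp_vec p) \<in> carrier_vec (card (supp_vec p))"
    using S p by (auto intro!: carrier_vecI dim_subvec)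
  from subvec_transpose_mult_submatrix_one[OF Phi S J this] show ?thesis
    unfolding submatrix_one_mult_subvec_supp_vec[OF p] .
qed

lemma sgn_supp_in_image_if_minimal:
  fixes Phi :: "real mat" and p1 :: "real vec"
  defines "S \<equiv> supp_vec p1"
  assumes Phi: "Phi \<in> carrier_mat m n" and x0: "x0 \<in> carrier_vec n"
    and p1: "p1 \<in> dual_set Phi x0"
    and p1_min: "\<forall>p \<in> dual_set Phi x0. l1_norm p1 \<le> l1_norm p"
    and J: "J = {j. j < n \<and> \<bar>(transpose_mat Phi *\<^sub>v p1) $ j\<bar> = 1}"
    and rank: "vec_space.rank (card S) (submatrix Phi S J) = card J"
  shows "map_vec sgn (subvec p1 S) \<in> mat_image (submatrix Phi S J)"
proof (rule ccontr)
  assume q_notin: "map_vec sgn (subvec p1 S) \<notin> mat_image (submatrix Phi S J)"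
  have p1m: "p1 \<in> carrier_vec m" using p1 Phi by (simp add: dual_set_def)
  have S_m: "S \<subseteq> {..<m}" using p1m by (auto simp: S_def supp_vec_def)
  have "J \<subseteq> {..<n}" using J by auto
  then have A: "submatrix Phi S J \<in> carrier_mat (card S) (card J)"
    using Phi S_m by (auto simp: dim_submatrix Collect_less_and_mem_eq)
  have "map_vec sgn (subvec p1 S) \<in> carrier_vec (card S)"
    using S_m p1m by (auto intro!: carrier_vecI dim_subvec)
  then obtain d where "d \<in> carrier_vec (card S)"
    "transpose_mat (submatrix Phi S J) *\<^sub>v d = 0\<^sub>v (card J)" "map_vec sgn (subvec p1 S) \<bullet> d > 0"
    using exists_kernel_transpose_vec_pos_scalar[OF A rank _ q_notin] by blast
  then obtain p where "p \<in> dual_set Phi x0" "l1_norm p < l1_norm p1"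
    using dual_set_descent[OF Phi x0 p1 J] by (auto simp: S_def)
  then show False using p1_min by fastforce
qed

lemma invertible_mat_if_full_rank:
  fixes A :: "'a :: field mat"
  assumes A: "A \<in> carrier_mat n n" and rk: "vec_space.rank n A = n"
  shows "invertible_mat A"
proof -
  have "det A \<noteq> 0" using vec_space.det_rank_iff[OF A] rk by simp
  then obtain B where B: "B \<in> carrier_mat n n" "B * A = 1\<^sub>m n" "A * B = 1\<^sub>m n"
    using det_non_zero_imp_unit[OF A, of "()"] unfolding Units_def ring_mat_def by auto
  then show ?thesis
    using A by (auto simp: invertible_mat_def inverts_mat_def)
qed

lemma mat_kernel_full_col_rank:
  fixes A :: "'a :: field mat"
  assumes A: "A \<in> carrier_mat k r" and rk: "vec_space.rank k A = r"
  shows "mat_kernel A = {0\<^sub>v r}"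
  using A vec_space.full_col_rank_mult_vec_eq_0[OF A rk] by (auto simp: mat_kernel_def)

lemma mat_kernel_submatrix_one_mult:
  fixes A :: "'a :: field mat"
  assumes S: "S \<subseteq> {..<m}" and A: "A \<in> carrier_mat (card S) r"
  shows "mat_kernel (submatrix (1\<^sub>m m) UNIV S * A) = mat_kernel A"
proof -
  have E: "submatrix (1\<^sub>m m) UNIV S \<in> carrier_mat m (card S)"
    using S by (rule submatrix_one_carrier)
  have "(submatrix (1\<^sub>m m) UNIV S * A) *\<^sub>v v = 0\<^sub>v m \<longleftrightarrow> A *\<^sub>v v = 0\<^sub>v (card S)"
    if v: "v \<in> carrier_vec r" for v
  proof -
    have Av: "A *\<^sub>v v \<in> carrier_vec (card S)" using A v by simp
    have "(submatrix (1\<^sub>m m) UNIV S * A) *\<^sub>v v = submatrix (1\<^sub>m m) UNIV S *\<^sub>v (A *\<^sub>v v)"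
      using E A v by (rule assoc_mult_mat_vec)
    moreover have "submatrix (1\<^sub>m m) UNIV S *\<^sub>v 0\<^sub>v (card S) = 0\<^sub>v m"
      using carrier_matD[OF E] by (intro eq_vecI) (auto simp: scalar_prod_def)
    ultimately show ?thesis
      using submatrix_one_mult_vec_eq_0[OF S Av] by auto
  qed
  moreover have "submatrix (1\<^sub>m m) UNIV S * A \<in> carrier_mat m r"
    using E A by (rule mult_carrier_mat)
  ultimately show ?thesis
    by (auto simp: mat_kernel[OF A] mat_kernel[of _ m r])
qed

lemma coord_proj_mult_vec_index:
  fixes v :: "real vec"
  assumes v: "v \<in> carrier_vec m" and i: "i < m"
  shows "(coord_proj m S *\<^sub>v v) $ i = (if i \<in> S then v $ i else 0)"
proof -
  have "(coord_proj m S *\<^sub>v v) $ i = (\<Sum>a<m. coord_proj m S $$ (i, a) * v $ a)"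
    by (rule mult_mat_vec_index_sum[OF _ v i]) (simp add: coord_proj_def)
  also have "\<dots> = (\<Sum>a<m. if i \<in> S \<and> a = i then v $ a else 0)"
    using i by (intro sum.cong) (auto simp: coord_proj_def)
  finally show ?thesis using i by (simp add: sum.delta')
qed

lemma coord_proj_mult_submatrix:
  fixes Phi :: "real mat"
  assumes Phi: "Phi \<in> carrier_mat m n" and S: "S \<subseteq> {..<m}" and J: "J \<subseteq> {..<n}"
  shows "coord_proj m S * submatrix Phi UNIV J = submatrix (1\<^sub>m m) UNIV S * submatrix Phi S J"
proof -
  define E :: "real mat" where "E = submatrix (1\<^sub>m m) UNIV S"
  have E: "E \<in> carrier_mat m (card S)"
    using S by (simp add: E_def submatrix_one_carrier)
  have PJ: "submatrix Phi UNIV J \<in> carrier_mat m (card J)"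
    using Phi J by (auto simp: dim_submatrix Collect_less_and_mem_eq)
  have A: "submatrix Phi S J \<in> carrier_mat (card S) (card J)"
    using Phi S J by (auto simp: dim_submatrix Collect_less_and_mem_eq)
  have P: "coord_proj m S \<in> carrier_mat m m" by (simp add: coord_proj_def)
  show ?thesis
    unfolding E_def[symmetric]
  proof (rule eq_matI)
    fix i k assume "i < dim_row (E * submatrix Phi S J)" "k < dim_col (E * submatrix Phi S J)"
    then have i: "i < m" and k: "k < card J" using E A by auto
    have "(coord_proj m S * submatrix Phi UNIV J) $$ (i, k)
        = (coord_proj m S *\<^sub>v col (submatrix Phi UNIV J) k) $ i"
      using P PJ i k by simp
    also have "\<dots> = (if i \<in> S then Phi $$ (i, pick J k) else 0)"
      using PJ Phi J i k
      by (simp add: coord_proj_mult_vec_index submatrix_index pick_UNIV Collect_less_and_mem_eq)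
    also have "\<dots> = (E *\<^sub>v col (submatrix Phi S J) k) $ i"
      using A Phi S J i k pick_card_in_set[of i S]
        card_less_member_less_card[OF finite_subset[OF S], of i]
      by (simp add: E_def submatrix_one_mult_vec_index[OF S _ i] submatrix_index
          Collect_less_and_mem_eq)
    also have "\<dots> = (E * submatrix Phi S J) $$ (i, k)"
      using E A i k by simp
    finally show "(coord_proj m S * submatrix Phi UNIV J) $$ (i, k) = (E * submatrix Phi S J) $$ (i, k)" .
  qed (use P PJ E A in auto)
qed

theorem lemma2:
  fixes Phi :: "real mat" and x0 p1 :: "real vec" and m n :: nat
    and J S :: "nat set" and sJ qS :: "real vec"
  assumes Phi: "Phi \<in> carrier_mat m n"
    and x0: "x0 \<in> carrier_vec n" and x0_nz: "x0 \<noteq> 0\<^sub>v n"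
    and ident: "identifiable Phi x0"
    and p1: "p1 \<in> dual_set Phi x0"
    and p1_min: "\<forall>p \<in> dual_set Phi x0. l1_norm p1 \<le> l1_norm p"
    and J_def: "J = {i. i < n \<and> \<bar>(transpose_mat Phi *\<^sub>v p1) $ i\<bar> = 1}"
    and S_def: "S = supp_vec p1"
    and sJ_def: "sJ = subvec (transpose_mat Phi *\<^sub>v p1) J"
    and qS_def: "qS = map_vec sgn (subvec p1 S)"
    and rank: "full_rank (submatrix Phi S J)"
    and hJ: "\<forall>S'. S' \<subseteq> {..<m} \<and> card S' < card J \<longrightarrow>
               sJ \<notin> mat_image (transpose_mat (submatrix Phi S' J))"
    and hS: "\<forall>J'. J' \<subseteq> {..<n} \<and> card J' < card S \<longrightarrow>
               qS \<notin> mat_image (submatrix Phi S J')"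
  shows "card S = card J \<and> invertible_mat (submatrix Phi S J)
    \<and> coord_proj m S * submatrix Phi UNIV J = submatrix (1\<^sub>m m) UNIV S * submatrix Phi S J
    \<and> mat_kernel (coord_proj m S * submatrix Phi UNIV J) = {0\<^sub>v (card J)}"
proof -
  have p1m: "p1 \<in> carrier_vec m" using p1 Phi by (simp add: dual_set_def)
  have S: "S \<subseteq> {..<m}" using p1m by (auto simp: S_def supp_vec_def)
  have J: "J \<subseteq> {..<n}" using J_def by auto
  have A: "submatrix Phi S J \<in> carrier_mat (card S) (card J)"
    using Phi S J by (auto simp: dim_submatrix Collect_less_and_mem_eq)
  have "subvec p1 S \<in> carrier_vec (card S)"
    using S p1m by (auto intro!: carrier_vecI dim_subvec)
  then have "sJ \<in> mat_image (transpose_mat (submatrix Phi S J))"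
    using subvec_transpose_mult_eq_submatrix_supp_vec[OF Phi p1m J] A
    by (auto simp: mat_image_def sJ_def S_def)
  then have J_le_S: "card J \<le> card S"
    using hJ S not_le by blast
  have S_le_J: "card S \<le> card J"
  proof (rule ccontr)
    assume "\<not> card S \<le> card J"
    then show False
      using sgn_supp_in_image_if_minimal[OF Phi x0 p1 p1_min J_def] rank hS J A
      by (auto simp: full_rank_def S_def qS_def)
  qed
  have A_square: "submatrix Phi S J \<in> carrier_mat (card S) (card S)"
    and rank_S: "vec_space.rank (card S) (submatrix Phi S J) = card S"
    using A rank J_le_S S_le_J by (auto simp: full_rank_def)
  show ?thesis
    using J_le_S S_le_J invertible_mat_if_full_rank[OF A_square rank_S]
      coord_proj_mult_submatrix[OF Phi S J]
      mat_kernel_submatrix_one_mult[OF S A] mat_kernel_full_col_rank[OF A_square rank_S]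
    by simp
qed

end
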